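(* Let $\mathcal R$ be a measure-preserving equivalence relation on a standard probability space $(X,\mu)$ and suppose there is $n\in\mathbb N$ such that every $\mathcal R$-class has cardinality at most $n$. Then the full group $[\mathcal R]$ is locally finite.
   Context: Null sets are ignored. $[\mathcal R]$ is the group of measure-preserving transformations $T$ of $X$ with $(x,T(x))\in\mathcal R$ for all $x$. A group is locally finite if every finitely generated subgroup is finite. *)

theory Defs
  imports "HOL-Probability.Probability"
begin

definition standard_prob_space :: "'a::polish_space measure \<Rightarrow> bool" where
  "standard_prob_space M \<longleftrightarrow> prob_space M \<and> sets M = sets borel"

definition borel_equiv_rel :: "'a::polish_space measure \<Rightarrow> ('a \<times> 'a) set \<Rightarrow> bool" where
  "borel_equiv_rel M R \<longleftrightarrow> equiv (space M) R \<and> R \<in> sets (M \<Otimes>\<^sub>M M)"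

definition measure_preserving_equiv :: "'a::polish_space measure \<Rightarrow> ('a \<times> 'a) set \<Rightarrow> bool" where
  "measure_preserving_equiv M R \<longleftrightarrow> borel_equiv_rel M R \<and>
     (\<forall>A f. A \<in> sets M \<longrightarrow> f \<in> measurable M M \<longrightarrow> inj_on f A \<longrightarrow>
        (\<forall>x\<in>A. (x, f x) \<in> R) \<longrightarrow> f ` A \<in> sets M \<longrightarrow> measure M (f ` A) = measure M A)"

definition measure_preserving :: "'a measure \<Rightarrow> ('a \<Rightarrow> 'a) set" where
  "measure_preserving M = {T. T \<in> measurable M M \<and> distr M M T = M}"

definition full_group :: "'a measure \<Rightarrow> ('a \<times> 'a) set \<Rightarrow> ('a \<Rightarrow> 'a) set" where
  "full_group M R = {T. T \<in> measure_preserving M \<and>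
     (\<exists>S \<in> measure_preserving M. (AE x in M. S (T x) = x) \<and> (AE x in M. T (S x) = x)) \<and>
     (AE x in M. (x, T x) \<in> R)}"

definition ae_eq :: "'a measure \<Rightarrow> ('a \<Rightarrow> 'a) \<Rightarrow> ('a \<Rightarrow> 'a) \<Rightarrow> bool" where
  "ae_eq M S T \<longleftrightarrow> (AE x in M. S x = T x)"

text \<open>Representatives of the subgroup generated by F (inside the group of measure-preserving
  transformations modulo null sets).\<close>
inductive_set generated :: "'a measure \<Rightarrow> ('a \<Rightarrow> 'a) set \<Rightarrow> ('a \<Rightarrow> 'a) set"
  for M F where
  gen_id: "id \<in> generated M F"
| gen_base: "T \<in> F \<Longrightarrow> T \<in> generated M F"
| gen_comp: "S \<in> generated M F \<Longrightarrow> T \<in> generated M F \<Longrightarrow> S \<circ> T \<in> generated M F"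
| gen_inv: "S \<in> generated M F \<Longrightarrow> U \<in> measure_preserving M \<Longrightarrow>
     (AE x in M. U (S x) = x) \<Longrightarrow> (AE x in M. S (U x) = x) \<Longrightarrow> U \<in> generated M F"

text \<open>A group of transformations (mod null sets) is locally finite if every finitely generated
  subgroup is finite, i.e. has only finitely many classes modulo null sets.\<close>
definition locally_finite_mod_null :: "'a measure \<Rightarrow> ('a \<Rightarrow> 'a) set \<Rightarrow> bool" where
  "locally_finite_mod_null M G \<longleftrightarrow>
     (\<forall>F. finite F \<longrightarrow> F \<subseteq> G \<longrightarrow>
        (\<exists>K. finite K \<and> K \<subseteq> generated M F \<and> (\<forall>S \<in> generated M F. \<exists>T\<in>K. ae_eq M S T)))"

end

theory Submission
  imports Defs
begin

text \<open>Let \<open>F\<close> be a finite subset of the full group and adjoin an a.e. inverse of each element;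
  modulo null sets the subgroup generated by \<open>F\<close> then consists of compositions of words over
  the resulting finite alphabet \<open>L\<close>. For almost every \<open>x\<close> all words keep \<open>x\<close> in its
  \<open>R\<close>-class, so the \<open>L\<close>-orbit of \<open>x\<close> has at most \<open>n\<close> points. Enumerating it, the action of
  \<open>L\<close> on the orbit together with the position of \<open>x\<close> becomes a labelled structure on at most
  \<open>n\<close> points, of which there are only finitely many, and the value of a word at \<open>x\<close> is
  determined by how the word acts on this structure. Hence only finitely many words are needed
  to represent every word almost everywhere.\<close>

definition compose_word :: "('b \<Rightarrow> 'b) list \<Rightarrow> 'b \<Rightarrow> 'b" where
  "compose_word w = foldr (\<circ>) w id"

lemma compose_word_Nil [simp]: "compose_word [] = id"
  and compose_word_Cons [simp]: "compose_word (f # w) = f \<circ> compose_word w"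
  by (simp_all add: compose_word_def)

lemma compose_word_append [simp]: "compose_word (u @ v) = compose_word u \<circ> compose_word v"
  by (induction u) auto

definition word_orbit :: "('b \<Rightarrow> 'b) set \<Rightarrow> 'b \<Rightarrow> 'b set" where
  "word_orbit L x = (\<lambda>w. compose_word w x) ` lists L"

lemma self_in_word_orbit: "x \<in> word_orbit L x"
  unfolding word_orbit_def by (auto intro: image_eqI[of _ _ "[]"])

lemma word_orbit_closed: "y \<in> word_orbit L x \<Longrightarrow> f \<in> L \<Longrightarrow> f y \<in> word_orbit L x"
  unfolding word_orbit_def by (auto intro!: image_eqI[of _ _ "f # _"])

lemma compose_word_transport:
  assumes e: "bij_betw e {..<m} A" and closed: "\<forall>f\<in>L. f ` A \<subseteq> A"
    and \<sigma>: "\<forall>f\<in>L. \<forall>i<m. \<sigma> f i = the_inv_into {..<m} e (f (e i))"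
    and "w \<in> lists L" "i < m"
  shows "compose_word (map \<sigma> w) i < m \<and> compose_word w (e i) = e (compose_word (map \<sigma> w) i)"
  using \<open>w \<in> lists L\<close>
proof (induction w)
  case Nil
  show ?case using \<open>i < m\<close> by simp
next
  case (Cons f w)
  define j where "j = compose_word (map \<sigma> w) i"
  have j: "j < m" "compose_word w (e i) = e j" using Cons unfolding j_def by auto
  have "f (e j) \<in> A"
    using closed Cons.hyps bij_betw_apply[OF e] j(1) by blast
  then have "the_inv_into {..<m} e (f (e j)) < m \<and> e (the_inv_into {..<m} e (f (e j))) = f (e j)"
    using bij_betw_apply[OF bij_betw_the_inv_into[OF e]] f_the_inv_into_f_bij_betw[OF e] by auto
  then show ?case using \<sigma> Cons.hyps j unfolding j_def by simp
qed

definition word_orbit_model ::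
    "('b \<Rightarrow> 'b) set \<Rightarrow> 'b \<Rightarrow> nat \<Rightarrow> ((('b \<Rightarrow> 'b) \<Rightarrow> nat \<Rightarrow> nat) \<times> nat) \<Rightarrow> (nat \<Rightarrow> 'b) \<Rightarrow> bool" where
  "word_orbit_model L x m t e \<longleftrightarrow> fst t \<in> (\<Pi>\<^sub>E f\<in>L. \<Pi>\<^sub>E j\<in>{..<m}. {..<m}) \<and> snd t < m \<and>
    (\<forall>w\<in>lists L. compose_word (map (fst t) w) (snd t) < m \<and>
      compose_word w x = e (compose_word (map (fst t) w) (snd t)))"

lemma ex_word_orbit_model:
  assumes "finite (word_orbit L x)"
  shows "\<exists>t e. word_orbit_model L x (card (word_orbit L x)) t e"
proof -
  define m where "m = card (word_orbit L x)"
  obtain e where e: "bij_betw e {..<m} (word_orbit L x)"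
    using ex_bij_betw_nat_finite[OF assms] unfolding m_def lessThan_atLeast0 by blast
  define \<sigma> where "\<sigma> = (\<lambda>f\<in>L. \<lambda>j\<in>{..<m}. the_inv_into {..<m} e (f (e j)))"
  define i where "i = the_inv_into {..<m} e x"
  have i: "i < m" "e i = x"
    using bij_betw_apply[OF bij_betw_the_inv_into[OF e]] f_the_inv_into_f_bij_betw[OF e]
      self_in_word_orbit[of x L] unfolding i_def by auto
  have closed: "\<forall>f\<in>L. f ` word_orbit L x \<subseteq> word_orbit L x"
    by (simp add: image_subset_iff word_orbit_closed)
  have "\<forall>f\<in>L. \<forall>j<m. \<sigma> f j = the_inv_into {..<m} e (f (e j))"
    unfolding \<sigma>_def by simp
  note transport = compose_word_transport[OF e closed this]
  have "\<sigma> f j < m" if "f \<in> L" "j < m" for f j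
    using transport[of "[f]" j] that by simp
  then have "\<sigma> \<in> (\<Pi>\<^sub>E f\<in>L. \<Pi>\<^sub>E j\<in>{..<m}. {..<m})"
    unfolding \<sigma>_def by auto
  moreover have "compose_word (map \<sigma> w) i < m \<and> compose_word w x = e (compose_word (map \<sigma> w) i)"
    if "w \<in> lists L" for w
    using transport[OF that i(1)] i(2) by simp
  ultimately have "word_orbit_model L x m (\<sigma>, i) e"
    using i(1) unfolding word_orbit_model_def by simp
  then show ?thesis unfolding m_def by blast
qed

lemma finite_word_maps_on_bounded_orbits:
  assumes "finite L" and orbits: "\<forall>x\<in>X. finite (word_orbit L x) \<and> card (word_orbit L x) \<le> n"
  shows "\<exists>W. finite W \<and> W \<subseteq> lists L \<and>
    (\<forall>w\<in>lists L. \<exists>w'\<in>W. \<forall>x\<in>X. compose_word w x = compose_word w' x)"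
proof -
  define m where "m x = card (word_orbit L x)" for x
  have "\<forall>x\<in>X. \<exists>t e. word_orbit_model L x (m x) t e"
    unfolding m_def by (intro ballI ex_word_orbit_model) (use orbits in blast)
  from bchoice[OF this] obtain type where "\<forall>x\<in>X. \<exists>e. word_orbit_model L x (m x) (type x) e" ..
  from bchoice[OF this] obtain e where model: "\<forall>x\<in>X. word_orbit_model L x (m x) (type x) (e x)" ..
  define \<Psi> where "\<Psi> w = (\<lambda>t\<in>type ` X. compose_word (map (fst t) w) (snd t))" for w
  have m_le: "m x \<le> n" if "x \<in> X" for x
    using orbits that unfolding m_def by blast
  have "type x \<in> (\<Pi>\<^sub>E f\<in>L. \<Pi>\<^sub>E j\<in>{..<m x}. {..<m x}) \<times> {..<m x}" if "x \<in> X" for x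
    using model that unfolding word_orbit_model_def by (simp add: mem_Times_iff)
  then have "type ` X \<subseteq> (\<Union>k\<le>n. (\<Pi>\<^sub>E f\<in>L. \<Pi>\<^sub>E j\<in>{..<k}. {..<k}) \<times> {..<k})"
    using m_le by blast
  then have "finite (type ` X)"
    by (rule finite_subset) (auto intro!: finite_PiE \<open>finite L\<close>)
  moreover have "\<Psi> w \<in> (\<Pi>\<^sub>E t\<in>type ` X. {..<n})" if "w \<in> lists L" for w
  proof -
    have "\<Psi> w (type x) < n" if "x \<in> X" for x
    proof -
      have "compose_word (map (fst (type x)) w) (snd (type x)) < m x"
        using model that \<open>w \<in> lists L\<close> unfolding word_orbit_model_def by blast
      then show ?thesis using m_le[OF that] that unfolding \<Psi>_def by simp
    qed
    then show ?thesis unfolding \<Psi>_def by auto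
  qed
  ultimately have "finite (\<Psi> ` lists L)"
    by (metis (no_types, lifting) finite_PiE finite_lessThan finite_subset image_subsetI)
  then obtain W where W: "W \<subseteq> lists L" "finite W" "\<Psi> ` lists L = \<Psi> ` W"
    using finite_subset_image[of "\<Psi> ` lists L" \<Psi> "lists L"] by blast
  have "\<exists>w'\<in>W. \<forall>x\<in>X. compose_word w x = compose_word w' x" if w: "w \<in> lists L" for w
  proof -
    obtain w' where w': "w' \<in> W" "\<Psi> w = \<Psi> w'" using W(3) w by blast
    then have "w' \<in> lists L" using W(1) by blast
    have "compose_word w x = compose_word w' x" if "x \<in> X" for x
    proof -
      have "compose_word w x = e x (\<Psi> w (type x))"
        using model w that unfolding word_orbit_model_def \<Psi>_def by simp
      also have "\<dots> = e x (\<Psi> w' (type x))" using w'(2) by simp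
      also have "\<dots> = compose_word w' x"
        using model \<open>w' \<in> lists L\<close> that unfolding word_orbit_model_def \<Psi>_def by simp
      finally show ?thesis .
    qed
    then show ?thesis using w'(1) by blast
  qed
  then show ?thesis using W by blast
qed

lemma measure_preserving_id: "id \<in> measure_preserving M"
  unfolding measure_preserving_def by (simp add: id_def)

lemma measure_preserving_comp:
  "f \<in> measure_preserving M \<Longrightarrow> g \<in> measure_preserving M \<Longrightarrow> f \<circ> g \<in> measure_preserving M"
  unfolding measure_preserving_def by (auto simp: distr_distr[symmetric])

lemma AE_measure_preserving_comp:
  assumes "T \<in> measure_preserving M" and "AE y in M. P y"
  shows "AE x in M. P (T x)"
proof -
  have distr: "distr M M T = M" using assms(1) unfolding measure_preserving_def by simp
  have "AE y in distr M M T. P y" unfolding distr by (rule assms(2))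
  then show ?thesis
    using assms(1) unfolding measure_preserving_def by (auto intro: AE_distrD)
qed

lemma compose_word_measure_preserving:
  "w \<in> lists (measure_preserving M) \<Longrightarrow> compose_word w \<in> measure_preserving M"
  by (induction w) (auto intro: measure_preserving_comp measure_preserving_id)

lemma generated_subset_measure_preserving:
  assumes "F \<subseteq> measure_preserving M"
  shows "generated M F \<subseteq> measure_preserving M"
proof
  fix S assume "S \<in> generated M F"
  then show "S \<in> measure_preserving M"
    by induction (use assms in \<open>auto simp del: comp_apply id_apply
      intro: measure_preserving_id measure_preserving_comp\<close>)
qed

lemma compose_word_generated: "w \<in> lists (generated M F) \<Longrightarrow> compose_word w \<in> generated M F"
  by (induction w) (auto intro: generated.intros)

lemma compose_word_ae_inverse:
  assumes L: "L \<subseteq> measure_preserving M" and inv: "\<forall>f\<in>L. \<exists>g\<in>L. AE x in M. g (f x) = x"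
    and "w \<in> lists L"
  shows "\<exists>v\<in>lists L. AE x in M. compose_word v (compose_word w x) = x"
  using \<open>w \<in> lists L\<close>
proof (induction w)
  case Nil
  show ?case by (intro bexI[of _ "[]"]) auto
next
  case (Cons f w)
  obtain v where v: "v \<in> lists L" "AE x in M. compose_word v (compose_word w x) = x"
    using Cons.IH by blast
  obtain g where g: "g \<in> L" "AE y in M. g (f y) = y" using inv Cons.hyps by blast
  have "AE x in M. g (f (compose_word w x)) = compose_word w x"
    using AE_measure_preserving_comp[OF compose_word_measure_preserving g(2)] Cons.hyps L by blast
  with v(2) have "AE x in M. compose_word (v @ [g]) (compose_word (f # w) x) = x"
    by eventually_elim simp
  then show ?case using v(1) g(1) by (intro bexI[of _ "v @ [g]"]) auto
qed

lemma generated_ae_eq_compose_word: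
  assumes "F \<subseteq> L" and L: "L \<subseteq> measure_preserving M"
    and inv: "\<forall>f\<in>L. \<exists>g\<in>L. AE x in M. g (f x) = x"
    and "S \<in> generated M F"
  shows "\<exists>w\<in>lists L. AE x in M. S x = compose_word w x"
  using \<open>S \<in> generated M F\<close>
proof induction
  case gen_id
  show ?case by (intro bexI[of _ "[]"]) auto
next
  case (gen_base T)
  then show ?case using \<open>F \<subseteq> L\<close> by (intro bexI[of _ "[T]"]) auto
next
  case (gen_comp S T)
  then obtain u v where uv: "u \<in> lists L" "v \<in> lists L"
    and S: "AE x in M. S x = compose_word u x" and T: "AE x in M. T x = compose_word v x"
    by blast
  have "T \<in> measure_preserving M"
    using gen_comp.hyps(2) generated_subset_measure_preserving \<open>F \<subseteq> L\<close> L by blast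
  from AE_measure_preserving_comp[OF this S] T
  have "AE x in M. (S \<circ> T) x = compose_word (u @ v) x" by eventually_elim simp
  then show ?case using uv by (intro bexI[of _ "u @ v"]) auto
next
  case (gen_inv S U)
  then obtain w where w: "w \<in> lists L" and S: "AE x in M. S x = compose_word w x" by blast
  obtain v where v: "v \<in> lists L" "AE x in M. compose_word v (compose_word w x) = x"
    using compose_word_ae_inverse[OF L inv w] by blast
  \<comment> \<open>a.e. \<open>U x = v (w (U x)) = v (S (U x)) = v x\<close>\<close>
  from AE_measure_preserving_comp[OF gen_inv.hyps(2) S]
    AE_measure_preserving_comp[OF gen_inv.hyps(2) v(2)] gen_inv.hyps(4)
  have "AE x in M. U x = compose_word v x" by eventually_elim metis
  then show ?case using v(1) by blast
qed

lemma full_group_inverse: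
  assumes "sym R" and "T \<in> full_group M R"
  obtains S where "S \<in> full_group M R" "AE x in M. S (T x) = x" "AE x in M. T (S x) = x"
proof -
  obtain S where S: "S \<in> measure_preserving M" "AE x in M. S (T x) = x" "AE x in M. T (S x) = x"
    using assms(2) unfolding full_group_def by blast
  have "AE x in M. (S x, T (S x)) \<in> R"
    using AE_measure_preserving_comp[OF S(1)] assms(2) unfolding full_group_def by blast
  with S(3) have "AE x in M. (x, S x) \<in> R"
    by eventually_elim (use \<open>sym R\<close> in \<open>auto dest: symD\<close>)
  then have "S \<in> full_group M R"
    using S assms(2) unfolding full_group_def by blast
  then show ?thesis using S that by blast
qed

lemma AE_compose_word_in_class:
  assumes "countable L" and L: "L \<subseteq> full_group M R" and R: "equiv (space M) R"
  shows "AE x in M. \<forall>w\<in>lists L. (x, compose_word w x) \<in> R"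
proof -
  have L_mp: "L \<subseteq> measure_preserving M" using L unfolding full_group_def by blast
  have "trans R" using R by (simp add: equiv_def)
  have "AE x in M. (x, compose_word w x) \<in> R" if "w \<in> lists L" for w
    using that
  proof (induction w)
    case Nil
    show ?case using R by (auto intro!: AE_I2 dest: equiv_class_self)
  next
    case (Cons f w)
    have "AE x in M. (compose_word w x, f (compose_word w x)) \<in> R"
      using AE_measure_preserving_comp[OF compose_word_measure_preserving] Cons.hyps L L_mp
      unfolding full_group_def by blast
    with Cons.IH show ?case
      by eventually_elim (auto intro: transD[OF \<open>trans R\<close>])
  qed
  then show ?thesis using \<open>countable L\<close> by (simp add: AE_ball_countable)
qed

lemma finitely_many_compose_words_mod_null:
  assumes "finite L" and L: "L \<subseteq> full_group M R" and R: "equiv (space M) R"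
    and classes: "\<forall>x\<in>space M. finite (R `` {x}) \<and> card (R `` {x}) \<le> n"
  shows "\<exists>W. finite W \<and> W \<subseteq> lists L \<and>
    (\<forall>w\<in>lists L. \<exists>w'\<in>W. AE x in M. compose_word w x = compose_word w' x)"
proof -
  define X where "X = {x \<in> space M. \<forall>w\<in>lists L. (x, compose_word w x) \<in> R}"
  have "AE x in M. x \<in> X"
    using AE_space AE_compose_word_in_class[OF countable_finite[OF \<open>finite L\<close>] L R]
    unfolding X_def by eventually_elim blast
  have "\<forall>x\<in>X. finite (word_orbit L x) \<and> card (word_orbit L x) \<le> n"
  proof
    fix x assume "x \<in> X"
    then have sub: "word_orbit L x \<subseteq> R `` {x}" unfolding word_orbit_def X_def by auto
    have "finite (R `` {x})" "card (R `` {x}) \<le> n"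
      using classes \<open>x \<in> X\<close> unfolding X_def by blast+
    then show "finite (word_orbit L x) \<and> card (word_orbit L x) \<le> n"
      using finite_subset[OF sub] card_mono[OF _ sub] le_trans by blast
  qed
  from finite_word_maps_on_bounded_orbits[OF \<open>finite L\<close> this]
  obtain W where W: "finite W" "W \<subseteq> lists L"
    "\<forall>w\<in>lists L. \<exists>w'\<in>W. \<forall>x\<in>X. compose_word w x = compose_word w' x"
    by blast
  have "\<exists>w'\<in>W. AE x in M. compose_word w x = compose_word w' x" if w: "w \<in> lists L" for w
  proof -
    obtain w' where "w' \<in> W" and eq: "\<forall>x\<in>X. compose_word w x = compose_word w' x"
      using W(3) w by blast
    from \<open>AE x in M. x \<in> X\<close> have "AE x in M. compose_word w x = compose_word w' x"
      by eventually_elim (use eq in blast)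
    then show ?thesis using \<open>w' \<in> W\<close> by blast
  qed
  then show ?thesis using W(1,2) by blast
qed

lemma full_group_inverse_closed_generators:
  assumes "sym R" and "finite F" and F: "F \<subseteq> full_group M R"
  obtains L where "finite L" "F \<subseteq> L" "L \<subseteq> full_group M R" "L \<subseteq> generated M F"
    "\<forall>f\<in>L. \<exists>g\<in>L. AE x in M. g (f x) = x"
proof -
  have "\<forall>T\<in>F. \<exists>S. S \<in> full_group M R \<and> (AE x in M. S (T x) = x) \<and> (AE x in M. T (S x) = x)"
  proof
    fix T assume "T \<in> F"
    with F have "T \<in> full_group M R" by blast
    then obtain S where "S \<in> full_group M R" "AE x in M. S (T x) = x" "AE x in M. T (S x) = x"
      by (rule full_group_inverse[OF \<open>sym R\<close>])
    then show "\<exists>S. S \<in> full_group M R \<and> (AE x in M. S (T x) = x) \<and> (AE x in M. T (S x) = x)"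
      by blast
  qed
  from bchoice[OF this] obtain inv where inv: "\<forall>T\<in>F. inv T \<in> full_group M R \<and>
      (AE x in M. inv T (T x) = x) \<and> (AE x in M. T (inv T x) = x)"
    by blast
  show ?thesis
  proof (rule that[of "F \<union> inv ` F"])
    show "finite (F \<union> inv ` F)" using \<open>finite F\<close> by simp
    show "F \<subseteq> F \<union> inv ` F" by blast
    show "F \<union> inv ` F \<subseteq> full_group M R" using F inv by blast
    have "inv T \<in> generated M F" if "T \<in> F" for T
      using inv that by (intro gen_inv[OF gen_base]) (auto simp: full_group_def)
    then show "F \<union> inv ` F \<subseteq> generated M F" by (auto intro: gen_base)
    show "\<forall>f\<in>F \<union> inv ` F. \<exists>g\<in>F \<union> inv ` F. AE x in M. g (f x) = x"
    proof
      fix f assume "f \<in> F \<union> inv ` F"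
      then consider "f \<in> F" | T where "T \<in> F" "f = inv T" by blast
      then show "\<exists>g\<in>F \<union> inv ` F. AE x in M. g (f x) = x"
      proof cases
        case 1
        then show ?thesis using inv by (intro bexI[of _ "inv f"]) auto
      next
        case 2
        then show ?thesis using inv by (intro bexI[of _ T]) auto
      qed
    qed
  qed
qed

theorem mainTheorem9:
  fixes M :: "'a::polish_space measure" and R :: "('a \<times> 'a) set" and n :: nat
  assumes "standard_prob_space M"
    and "measure_preserving_equiv M R"
    and "\<forall>x \<in> space M. finite (R `` {x}) \<and> card (R `` {x}) \<le> n"
  shows "locally_finite_mod_null M (full_group M R)"
  unfolding locally_finite_mod_null_def
proof (intro allI impI)
  fix F assume "finite F" and F: "F \<subseteq> full_group M R"
  have R: "equiv (space M) R"
    using assms(2) unfolding measure_preserving_equiv_def borel_equiv_rel_def by blast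
  then have "sym R" by (simp add: equiv_def)
  then obtain L where L: "finite L" "F \<subseteq> L" "L \<subseteq> full_group M R" "L \<subseteq> generated M F"
    "\<forall>f\<in>L. \<exists>g\<in>L. AE x in M. g (f x) = x"
    using full_group_inverse_closed_generators[OF _ \<open>finite F\<close> F] by blast
  then have L_mp: "L \<subseteq> measure_preserving M" unfolding full_group_def by blast
  obtain W where W: "finite W" "W \<subseteq> lists L"
    "\<forall>w\<in>lists L. \<exists>w'\<in>W. AE x in M. compose_word w x = compose_word w' x"
    using finitely_many_compose_words_mod_null[OF L(1,3) R assms(3)] by blast
  show "\<exists>K. finite K \<and> K \<subseteq> generated M F \<and> (\<forall>S\<in>generated M F. \<exists>T\<in>K. ae_eq M S T)"
  proof (intro exI conjI ballI)
    show "finite (compose_word ` W)" using W(1) by simp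
    show "compose_word ` W \<subseteq> generated M F"
      using W(2) L(4) by (auto intro: compose_word_generated)
    fix S assume "S \<in> generated M F"
    then obtain w where "w \<in> lists L" and S: "AE x in M. S x = compose_word w x"
      using generated_ae_eq_compose_word[OF L(2) L_mp L(5)] by blast
    then obtain w' where "w' \<in> W" and w': "AE x in M. compose_word w x = compose_word w' x"
      using W(3) by blast
    from S w' have "AE x in M. S x = compose_word w' x" by eventually_elim simp
    then show "\<exists>T\<in>compose_word ` W. ae_eq M S T"
      using \<open>w' \<in> W\<close> unfolding ae_eq_def by blast
  qed
qed

end
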